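(* Let $\langle(\kappa_n,I_n):n<\omega\rangle$ be such that each $\kappa_n$ is a cardinal and $I_n$ is an ideal on $\kappa_n$, and let $\langle J_n:n<\omega\rangle$ be the associated ideals defined in the context. Then for every $n<\omega$ and $A\subseteq\prod_{\ell<n}\kappa_\ell$: $A\in J_n$ if and only if there are functions $f_0,\dots,f_{n-1}$ such that $\mathrm{Dom}(f_\ell)=\prod_{m=\ell+1}^{n-1}\kappa_m$, $\mathrm{Rang}(f_\ell)\subseteq I_\ell$, and $A\subseteq\bigcup_{\ell<n}A^n_\ell(f_\ell)$, where $$A^n_\ell(f_\ell)=\{\eta\in\textstyle\prod_{m<n}\kappa_m:\eta(\ell)\in f_\ell(\eta\restriction(\ell,n))\}$$ and $\eta\restriction(\ell,n)=\langle\eta(\ell+1),\dots,\eta(n-1)\rangle$.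
   Context: $J_n$ is an ideal on $\prod_{\ell<n}\kappa_\ell$ defined by induction: $J_0$ is the trivial ideal $\{\emptyset\}$ on $\{\langle\rangle\}$; $J_{n+1}=\{A\subseteq\prod_{\ell\le n}\kappa_\ell:\{\alpha<\kappa_n:\{\eta\in\prod_{\ell<n}\kappa_\ell:\eta^\frown\langle\alpha\rangle\in A\}\notin J_n\}\in I_n\}$. *)

theory Defs
  imports Main
begin

text \<open>Each cardinal kappa_n is represented by an (arbitrary) set K n; only the
  underlying set matters. Elements of prod_{l<n} kappa_l are lists of length n.\<close>

definition is_ideal :: "'a set \<Rightarrow> 'a set set \<Rightarrow> bool" where
  "is_ideal S I \<longleftrightarrow> I \<subseteq> Pow S \<and> {} \<in> I \<and> S \<notin> I
     \<and> (\<forall>A\<in>I. \<forall>B. B \<subseteq> A \<longrightarrow> B \<in> I)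
     \<and> (\<forall>A\<in>I. \<forall>B\<in>I. A \<union> B \<in> I)"

definition prodK :: "(nat \<Rightarrow> 'a set) \<Rightarrow> nat \<Rightarrow> 'a list set" where
  "prodK K n = {\<eta>. length \<eta> = n \<and> (\<forall>i<n. \<eta> ! i \<in> K i)}"

text \<open>prod_{m=l+1}^{n-1} K m, as lists indexed from 0 (entry i lies in K (l+1+i))\<close>
definition prodK_from :: "(nat \<Rightarrow> 'a set) \<Rightarrow> nat \<Rightarrow> nat \<Rightarrow> 'a list set" where
  "prodK_from K l n = {\<nu>. length \<nu> = n - Suc l \<and> (\<forall>i<length \<nu>. \<nu> ! i \<in> K (Suc l + i))}"

primrec J :: "(nat \<Rightarrow> 'a set) \<Rightarrow> (nat \<Rightarrow> 'a set set) \<Rightarrow> nat \<Rightarrow> 'a list set set" where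
  "J K I 0 = {{}}"
| "J K I (Suc n) = {A. A \<subseteq> prodK K (Suc n) \<and>
      {\<alpha> \<in> K n. {\<eta> \<in> prodK K n. \<eta> @ [\<alpha>] \<in> A} \<notin> J K I n} \<in> I n}"

text \<open>A^n_l(f) = {eta in prod_{m<n} K m. eta(l) in f(eta restricted to (l,n))},
  where eta restricted to (l,n) = <eta(l+1),...,eta(n-1)> = drop (l+1) eta.\<close>
definition Aset :: "(nat \<Rightarrow> 'a set) \<Rightarrow> nat \<Rightarrow> nat \<Rightarrow> ('a list \<Rightarrow> 'a set) \<Rightarrow> 'a list set" where
  "Aset K n l f = {\<eta> \<in> prodK K n. \<eta> ! l \<in> f (drop (Suc l) \<eta>)}"

end

theory Submission
  imports Defs
begin

text \<open>Induction on n, peeling off the last coordinate \<alpha> \<in> K n. If f_0, ..., f_n cover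
  A \<subseteq> prod_{l\<le>n} K l, then for every \<alpha> outside f_n(<>) \<in> I_n the functions
  f_l(- @ [\<alpha>]), l < n, cover the slice {\<eta>. \<eta> @ [\<alpha>] \<in> A}; so the slices outside J_n
  have their \<alpha> in a set from I_n. Conversely, covers F \<alpha> of the slices for all \<alpha>
  outside some B \<in> I_n glue to a cover of A: f_n(<>) = B, and for l < n, f_l(\<nu>)
  consults F at the last entry of \<nu>.\<close>

definition slice :: "(nat \<Rightarrow> 'a set) \<Rightarrow> nat \<Rightarrow> 'a list set \<Rightarrow> 'a \<Rightarrow> 'a list set" where
  "slice K n A \<alpha> = {\<eta> \<in> prodK K n. \<eta> @ [\<alpha>] \<in> A}"

definition admissible ::
    "(nat \<Rightarrow> 'a set) \<Rightarrow> (nat \<Rightarrow> 'a set set) \<Rightarrow> nat \<Rightarrow> (nat \<Rightarrow> 'a list \<Rightarrow> 'a set) \<Rightarrow> bool" where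
  "admissible K I n f \<longleftrightarrow> (\<forall>l<n. \<forall>\<nu>\<in>prodK_from K l n. f l \<nu> \<in> I l)"

definition cover :: "(nat \<Rightarrow> 'a set) \<Rightarrow> nat \<Rightarrow> (nat \<Rightarrow> 'a list \<Rightarrow> 'a set) \<Rightarrow> 'a list set" where
  "cover K n f = (\<Union>l<n. Aset K n l (f l))"

lemma J_Suc_iff:
  assumes "A \<subseteq> prodK K (Suc n)"
  shows "A \<in> J K I (Suc n) \<longleftrightarrow> {\<alpha> \<in> K n. slice K n A \<alpha> \<notin> J K I n} \<in> I n"
  using assms by (simp add: slice_def)

lemma J_subset_prodK: "A \<in> J K I n \<Longrightarrow> A \<subseteq> prodK K n"
  by (cases n) auto

lemma slice_subset_prodK: "slice K n A \<alpha> \<subseteq> prodK K n"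
  by (auto simp: slice_def)

lemma snoc_in_prodK_iff:
  "length \<eta> = n \<Longrightarrow> \<eta> @ [\<alpha>] \<in> prodK K (Suc n) \<longleftrightarrow> \<eta> \<in> prodK K n \<and> \<alpha> \<in> K n"
  by (auto simp: prodK_def All_less_Suc nth_append)

lemma prodK_SucE:
  assumes "\<eta> \<in> prodK K (Suc n)"
  obtains \<eta>' \<alpha> where "\<eta> = \<eta>' @ [\<alpha>]" "length \<eta>' = n"
proof -
  have "length \<eta> = Suc n" using assms by (simp add: prodK_def)
  then show ?thesis using that by (metis length_Suc_conv_rev)
qed

lemma snoc_in_prodK_from_iff:
  assumes "l < n"
  shows "\<nu> @ [\<alpha>] \<in> prodK_from K l (Suc n) \<longleftrightarrow> \<nu> \<in> prodK_from K l n \<and> \<alpha> \<in> K n"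
proof (cases "length \<nu> = n - Suc l")
  case True
  with assms have "n = Suc l + length \<nu>" by simp
  then show ?thesis
    by (simp add: prodK_from_def All_less_Suc nth_append conj_commute)
next
  case False
  with assms show ?thesis by (simp add: prodK_from_def)
qed

lemma prodK_from_SucE:
  assumes "l < n" "\<nu> \<in> prodK_from K l (Suc n)"
  obtains \<nu>' \<alpha> where "\<nu> = \<nu>' @ [\<alpha>]"
proof -
  have "\<nu> \<noteq> []" using assms by (auto simp: prodK_from_def)
  then show ?thesis using that append_butlast_last_id by metis
qed

lemma Nil_in_prodK_from: "[] \<in> prodK_from K n (Suc n)"
  by (simp add: prodK_from_def)

lemma cover_cong: "(\<And>l. l < n \<Longrightarrow> f l = g l) \<Longrightarrow> cover K n f = cover K n g"
  by (simp add: cover_def)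

lemma snoc_in_cover_iff:
  assumes "length \<eta> = n"
  shows "\<eta> @ [\<alpha>] \<in> cover K (Suc n) f \<longleftrightarrow>
    \<eta> \<in> prodK K n \<and> \<alpha> \<in> K n \<and> (\<alpha> \<in> f n [] \<or> \<eta> \<in> cover K n (\<lambda>l \<nu>. f l (\<nu> @ [\<alpha>])))"
proof -
  have drop_snoc: "drop (Suc l) (\<eta> @ [\<alpha>]) = drop (Suc l) \<eta> @ [\<alpha>]" if "l < n" for l
    using that assms by simp
  have "\<eta> @ [\<alpha>] \<in> Aset K (Suc n) l (f l) \<longleftrightarrow>
      \<eta> \<in> prodK K n \<and> \<alpha> \<in> K n \<and> \<eta> \<in> Aset K n l (\<lambda>\<nu>. f l (\<nu> @ [\<alpha>]))" if "l < n" for l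
    using that assms by (auto simp: Aset_def snoc_in_prodK_iff drop_snoc nth_append)
  moreover have "\<eta> @ [\<alpha>] \<in> Aset K (Suc n) n (f n) \<longleftrightarrow> \<eta> \<in> prodK K n \<and> \<alpha> \<in> K n \<and> \<alpha> \<in> f n []"
    using assms by (simp add: Aset_def snoc_in_prodK_iff nth_append)
  ultimately show ?thesis
    by (auto simp: cover_def lessThan_Suc)
qed

lemma admissible_snoc:
  assumes "admissible K I (Suc n) f" "\<alpha> \<in> K n"
  shows "admissible K I n (\<lambda>l \<nu>. f l (\<nu> @ [\<alpha>]))"
  using assms by (simp add: admissible_def snoc_in_prodK_from_iff)

lemma in_J_if_covered:
  assumes down_closed: "\<And>l X Y. X \<in> I l \<Longrightarrow> Y \<subseteq> X \<Longrightarrow> Y \<in> I l"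
  shows "A \<subseteq> prodK K n \<Longrightarrow> admissible K I n f \<Longrightarrow> A \<subseteq> cover K n f \<Longrightarrow> A \<in> J K I n"
proof (induction n arbitrary: A f)
  case 0
  then show ?case by (simp add: prodK_def cover_def)
next
  case (Suc n)
  define B where "B = {\<alpha> \<in> K n. slice K n A \<alpha> \<notin> J K I n}"
  have "f n [] \<in> I n"
    using Suc.prems(2) Nil_in_prodK_from[of K n] unfolding admissible_def by blast
  moreover have "B \<subseteq> f n []"
  proof (intro subsetI, rule ccontr)
    fix \<alpha> assume "\<alpha> \<in> B" and "\<alpha> \<notin> f n []"
    then have "\<alpha> \<in> K n" and "slice K n A \<alpha> \<subseteq> cover K n (\<lambda>l \<nu>. f l (\<nu> @ [\<alpha>]))"
      using Suc.prems(3) by (auto simp: B_def slice_def prodK_def snoc_in_cover_iff)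
    then have "slice K n A \<alpha> \<in> J K I n"
      using Suc.IH[OF slice_subset_prodK admissible_snoc[OF Suc.prems(2)]] by simp
    with \<open>\<alpha> \<in> B\<close> show False by (simp add: B_def)
  qed
  ultimately have "B \<in> I n" by (rule down_closed)
  then show ?case using J_Suc_iff[OF Suc.prems(1)] by (simp add: B_def)
qed

definition glue :: "nat \<Rightarrow> 'a set \<Rightarrow> ('a \<Rightarrow> nat \<Rightarrow> 'a list \<Rightarrow> 'a set) \<Rightarrow> nat \<Rightarrow> 'a list \<Rightarrow> 'a set" where
  "glue n B F l \<nu> =
    (if l = n then B else if last \<nu> \<in> B then {} else F (last \<nu>) l (butlast \<nu>))"

lemma glue_snoc: "l < n \<Longrightarrow> glue n B F l (\<nu> @ [\<alpha>]) = (if \<alpha> \<in> B then {} else F \<alpha> l \<nu>)"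
  by (simp add: glue_def)

lemma admissible_glue:
  assumes "\<And>l. {} \<in> I l" "B \<in> I n" "\<And>\<alpha>. \<alpha> \<in> K n - B \<Longrightarrow> admissible K I n (F \<alpha>)"
  shows "admissible K I (Suc n) (glue n B F)"
  unfolding admissible_def
proof (intro allI impI ballI)
  fix l \<nu> assume l: "l < Suc n" and \<nu>: "\<nu> \<in> prodK_from K l (Suc n)"
  show "glue n B F l \<nu> \<in> I l"
  proof (cases "l = n")
    case True
    then show ?thesis using assms(2) by (simp add: glue_def)
  next
    case False
    with l have "l < n" by simp
    from \<open>l < n\<close> \<nu> obtain \<nu>' \<alpha> where \<nu>_eq: "\<nu> = \<nu>' @ [\<alpha>]" by (rule prodK_from_SucE)
    with \<nu> \<open>l < n\<close> have "\<nu>' \<in> prodK_from K l n" "\<alpha> \<in> K n"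
      by (simp_all add: snoc_in_prodK_from_iff)
    then show ?thesis
      using assms(1) assms(3)[of \<alpha>] \<open>l < n\<close> by (simp add: \<nu>_eq glue_snoc admissible_def)
  qed
qed

lemma cover_glue:
  assumes A_sub: "A \<subseteq> prodK K (Suc n)"
    and F: "\<And>\<alpha>. \<alpha> \<in> K n - B \<Longrightarrow> slice K n A \<alpha> \<subseteq> cover K n (F \<alpha>)"
  shows "A \<subseteq> cover K (Suc n) (glue n B F)"
proof
  fix \<eta> assume "\<eta> \<in> A"
  with A_sub obtain \<eta>' \<alpha> where \<eta>_eq: "\<eta> = \<eta>' @ [\<alpha>]" and len: "length \<eta>' = n"
    by (blast elim: prodK_SucE)
  have \<eta>'_in: "\<eta>' \<in> prodK K n" and \<alpha>_in: "\<alpha> \<in> K n"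
    using \<open>\<eta> \<in> A\<close> A_sub len by (auto simp: \<eta>_eq snoc_in_prodK_iff)
  have "\<eta>' \<in> cover K n (\<lambda>l \<nu>. glue n B F l (\<nu> @ [\<alpha>]))" if "\<alpha> \<notin> B"
  proof -
    have "cover K n (\<lambda>l \<nu>. glue n B F l (\<nu> @ [\<alpha>])) = cover K n (F \<alpha>)"
      using that by (intro cover_cong) (simp add: glue_snoc fun_eq_iff)
    moreover have "\<eta>' \<in> slice K n A \<alpha>"
      using \<eta>'_in \<open>\<eta> \<in> A\<close> by (simp add: slice_def \<eta>_eq)
    ultimately show ?thesis using F[of \<alpha>] that \<alpha>_in by auto
  qed
  then show "\<eta> \<in> cover K (Suc n) (glue n B F)"
    using \<eta>'_in \<alpha>_in len by (auto simp: \<eta>_eq snoc_in_cover_iff glue_def)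
qed

lemma covered_if_in_J:
  assumes empty_in: "\<And>l. {} \<in> I l"
  shows "A \<in> J K I n \<Longrightarrow> \<exists>f. admissible K I n f \<and> A \<subseteq> cover K n f"
proof (induction n arbitrary: A)
  case 0
  then show ?case by (simp add: admissible_def cover_def)
next
  case (Suc n)
  define B where "B = {\<alpha> \<in> K n. slice K n A \<alpha> \<notin> J K I n}"
  have A_sub: "A \<subseteq> prodK K (Suc n)" using Suc.prems by (rule J_subset_prodK)
  have "B \<in> I n" using Suc.prems J_Suc_iff[OF A_sub] by (simp add: B_def)
  have "\<exists>F. \<forall>\<alpha>\<in>K n - B. admissible K I n (F \<alpha>) \<and> slice K n A \<alpha> \<subseteq> cover K n (F \<alpha>)"
    using Suc.IH by (intro bchoice) (simp add: B_def)
  then obtain F where F: "\<forall>\<alpha>\<in>K n - B.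
      admissible K I n (F \<alpha>) \<and> slice K n A \<alpha> \<subseteq> cover K n (F \<alpha>)"
    by blast
  have "admissible K I (Suc n) (glue n B F)"
    by (rule admissible_glue) (use empty_in \<open>B \<in> I n\<close> F in auto)
  moreover have "A \<subseteq> cover K (Suc n) (glue n B F)"
    by (rule cover_glue) (use A_sub F in auto)
  ultimately show ?case by blast
qed

lemma J_iff_covered:
  assumes "\<And>l. is_ideal (K l) (I l)" "A \<subseteq> prodK K n"
  shows "A \<in> J K I n \<longleftrightarrow> (\<exists>f. admissible K I n f \<and> A \<subseteq> cover K n f)"
proof
  have "\<And>l. {} \<in> I l" using assms(1) by (simp add: is_ideal_def)
  then show "A \<in> J K I n \<Longrightarrow> \<exists>f. admissible K I n f \<and> A \<subseteq> cover K n f"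
    by (rule covered_if_in_J)
next
  assume "\<exists>f. admissible K I n f \<and> A \<subseteq> cover K n f"
  then obtain f where f: "admissible K I n f" "A \<subseteq> cover K n f" by blast
  have down_closed: "\<And>l X Y. X \<in> I l \<Longrightarrow> Y \<subseteq> X \<Longrightarrow> Y \<in> I l"
    using assms(1) by (simp add: is_ideal_def)
  show "A \<in> J K I n"
    by (rule in_J_if_covered) (fact down_closed assms(2) f)+
qed

theorem claim3p3:
  fixes K :: "nat \<Rightarrow> 'a set" and I :: "nat \<Rightarrow> 'a set set"
  assumes "\<And>n. is_ideal (K n) (I n)"
  shows "\<forall>n A. A \<subseteq> prodK K n \<longrightarrow>
           (A \<in> J K I n \<longleftrightarrow>
             (\<exists>f :: nat \<Rightarrow> 'a list \<Rightarrow> 'a set.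
                (\<forall>l<n. \<forall>\<nu>\<in>prodK_from K l n. f l \<nu> \<in> I l) \<and>
                A \<subseteq> (\<Union>l<n. Aset K n l (f l))))"
proof (intro allI impI)
  fix n A assume "A \<subseteq> prodK K n"
  then show "A \<in> J K I n \<longleftrightarrow> (\<exists>f. (\<forall>l<n. \<forall>\<nu>\<in>prodK_from K l n. f l \<nu> \<in> I l) \<and>
      A \<subseteq> (\<Union>l<n. Aset K n l (f l)))"
    by (rule J_iff_covered[OF assms, unfolded admissible_def cover_def])
qed

end
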